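(* Let $w\in[k]^n$ and let $m$ be a positive integer. If $\mathrm{LT}(w)\geq m$, then $w$ contains regular twins of length $m$.
   Context: $[k]=\{1,\dots,k\}$; $w[i]$ is the $i$-th letter of $w$. Two subsequences of $w$ are twins if they are equal as words and use disjoint sets of positions of $w$; $\mathrm{LT}(w)$ is the maximum length of twins in $w$. Twins $(w_1,w_2)$ are monotone if, for every $i$, the $i$-th letter of $w_1$ occurs in $w$ before the $i$-th letter of $w_2$. For monotone twins define $R=R(w_1,w_2,w)\in\{0,1,2\}^n$ by $R[i]=0$ if position $i$ is in neither twin, $R[i]=1$ if it is in $w_1$, $R[i]=2$ if it is in $w_2$. Monotone twins $(w_1,w_2)$ are regular if (a) there are no $i<j$ with $R[i]=2$, $R[j]=1$, $R[k']=0$ for all $i<k'<j$, and $w[i]=w[j]$; and (b) there are no $i<j$ with $R[i]\in\{1,2\}$, $R[j]=0$, $R[k']=0$ for all $i<k'<j$, and $w[i]=w[j]$. *)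

theory Defs
  imports Main
begin

text \<open>Words are lists; positions are 0-based indices \<open>0..<length w\<close>.
  A pair of twins is given by the two (disjoint) sets of positions used.\<close>

definition twins :: "'a list \<Rightarrow> nat set \<Rightarrow> nat set \<Rightarrow> bool" where
  "twins w I J \<longleftrightarrow> I \<subseteq> {..<length w} \<and> J \<subseteq> {..<length w} \<and> I \<inter> J = {}
     \<and> nths w I = nths w J"

definition LT :: "'a list \<Rightarrow> nat" where
  "LT w = Max {card I | I J. twins w I J}"

definition mono_twins :: "'a list \<Rightarrow> nat set \<Rightarrow> nat set \<Rightarrow> bool" where
  "mono_twins w I J \<longleftrightarrow> twins w I J \<and>
     (\<forall>i < card I. sorted_list_of_set I ! i < sorted_list_of_set J ! i)"

definition Rw :: "nat set \<Rightarrow> nat set \<Rightarrow> nat \<Rightarrow> nat" where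
  "Rw I J i = (if i \<in> I then 1 else if i \<in> J then 2 else 0)"

definition regular_twins :: "'a list \<Rightarrow> nat set \<Rightarrow> nat set \<Rightarrow> bool" where
  "regular_twins w I J \<longleftrightarrow> mono_twins w I J \<and>
     \<not> (\<exists>i j. i < j \<and> j < length w \<and> Rw I J i = 2 \<and> Rw I J j = 1 \<and>
            (\<forall>k. i < k \<and> k < j \<longrightarrow> Rw I J k = 0) \<and> w ! i = w ! j) \<and>
     \<not> (\<exists>i j. i < j \<and> j < length w \<and> Rw I J i \<in> {1, 2} \<and> Rw I J j = 0 \<and>
            (\<forall>k. i < k \<and> k < j \<longrightarrow> Rw I J k = 0) \<and> w ! i = w ! j)"

end

theory Submission
  imports Defs
begin

text \<open>Among monotone twins of length \<open>m\<close>, take one maximising the sum of all used positions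
  and, subject to that, minimising the sum of the positions of the first twin. A violation of (b)
  lets a used position \<open>i\<close> move to the free position \<open>j > i\<close> carrying the same letter, which
  increases the total; a violation of (a) lets the two twins exchange the positions \<open>i < j\<close>,
  which keeps the total and decreases the first twin's sum. Monotone twins of length \<open>m\<close> exist
  because pairing up the sorted positions of twins of length \<open>LT w\<close> and taking pointwise minima
  and maxima gives monotone twins, which may then be truncated.\<close>

lemma nths_set_eq_map_nth:
  assumes "sorted_wrt (<) xs" and "set xs \<subseteq> {..<length w}"
  shows "nths w (set xs) = map ((!) w) xs"
proof -
  have "nths [0..<length w] (set xs) = filter (\<lambda>i. i \<in> set xs) [0..<length w]"
    using assms(2) by (auto simp: filter_eq_nths intro!: arg_cong[where f = "nths _"])
  also have "\<dots> = xs"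
    using assms by (intro strict_sorted_equal) (auto simp: sorted_wrt_filter)
  finally show ?thesis
    by (metis map_nth nths_map)
qed

lemma sorted_wrt_less_list_update:
  fixes xs :: "'a::linorder list"
  assumes "sorted_wrt (<) xs" and "q < length xs"
    and "\<And>x. x \<in> set xs \<Longrightarrow> x \<noteq> xs ! q \<Longrightarrow> x < min (xs ! q) v \<or> max (xs ! q) v < x"
  shows "sorted_wrt (<) (xs[q := v])"
  unfolding sorted_wrt_iff_nth_less
proof (intro allI impI)
  fix a b assume ab: "a < b" "b < length (xs[q := v])"
  have less: "xs ! a < xs ! b" and mem: "xs ! a \<in> set xs" "xs ! b \<in> set xs"
    using assms(1) ab by (auto simp: sorted_wrt_iff_nth_less)
  show "xs[q := v] ! a < xs[q := v] ! b"
    using assms(3)[OF mem(1)] assms(3)[OF mem(2)] less ab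
    by (cases "a = q"; cases "b = q") (force simp: nth_list_update)+
qed

text \<open>Monotone twins as lists of positions: the \<open>t\<close>-th letter of the first twin sits at
  \<open>xs ! t\<close>, its copy in the second twin at \<open>ys ! t\<close>.\<close>

definition twin_lists :: "'a list \<Rightarrow> nat list \<Rightarrow> nat list \<Rightarrow> bool" where
  "twin_lists w xs ys \<longleftrightarrow> sorted_wrt (<) xs \<and> sorted_wrt (<) ys \<and> set xs \<inter> set ys = {} \<and>
     set ys \<subseteq> {..<length w} \<and> list_all2 (\<lambda>x y. x < y \<and> w ! x = w ! y) xs ys"

lemma twin_lists_fst_subset:
  assumes "twin_lists w xs ys"
  shows "set xs \<subseteq> {..<length w}"
proof
  fix x assume "x \<in> set xs"
  then obtain t where t: "t < length xs" "x = xs ! t"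
    by (auto simp: in_set_conv_nth)
  then have "ys ! t \<in> set ys" and "x < ys ! t"
    using assms by (auto simp: twin_lists_def list_all2_conv_all_nth)
  then show "x \<in> {..<length w}"
    using assms by (auto simp: twin_lists_def)
qed

lemma twin_lists_mono_twins:
  assumes tw: "twin_lists w xs ys"
  shows "mono_twins w (set xs) (set ys)"
proof -
  have sorted: "sorted_wrt (<) xs" "sorted_wrt (<) ys"
    and pairs: "list_all2 (\<lambda>x y. x < y \<and> w ! x = w ! y) xs ys"
    using tw by (auto simp: twin_lists_def)
  have "map ((!) w) xs = map ((!) w) ys"
    using pairs by (auto simp: list_all2_conv_all_nth intro: nth_equalityI)
  then have "twins w (set xs) (set ys)"
    using tw twin_lists_fst_subset[OF tw]
    by (simp add: twins_def twin_lists_def nths_set_eq_map_nth)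
  moreover have "sorted_list_of_set (set xs) = xs" "sorted_list_of_set (set ys) = ys"
    using sorted by (simp_all add: sorted_list_of_set.idem_if_sorted_distinct strict_sorted_iff)
  ultimately show ?thesis
    using pairs sorted by (simp add: mono_twins_def list_all2_conv_all_nth distinct_card strict_sorted_iff)
qed

lemma twin_lists_card:
  "twin_lists w xs ys \<Longrightarrow> card (set xs) = length xs"
  by (simp add: twin_lists_def distinct_card strict_sorted_iff)

lemma twin_lists_sum_list_le:
  assumes tw: "twin_lists w xs ys"
  shows "sum_list xs + sum_list ys \<le> \<Sum>{..<length w}"
proof -
  have "sum_list xs + sum_list ys = \<Sum>(set xs \<union> set ys)"
    using tw by (simp add: twin_lists_def strict_sorted_iff sum.union_disjoint sum.distinct_set_conv_list)
  also have "\<dots> \<le> \<Sum>{..<length w}"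
    using tw twin_lists_fst_subset[OF tw] by (intro sum_mono2) (auto simp: twin_lists_def)
  finally show ?thesis .
qed

lemma twin_lists_take:
  "twin_lists w xs ys \<Longrightarrow> twin_lists w (take m xs) (take m ys)"
  unfolding twin_lists_def using set_take_subset[of m xs] set_take_subset[of m ys]
  by (auto intro: list_all2_takeI)

lemma twin_lists_min_max:
  assumes "sorted_wrt (<) as" and "sorted_wrt (<) bs" and "set as \<inter> set bs = {}"
    and "set as \<union> set bs \<subseteq> {..<length w}" and "map ((!) w) as = map ((!) w) bs"
  shows "twin_lists w (map2 min as bs) (map2 max as bs)"
proof -
  let ?xs = "map2 min as bs" and ?ys = "map2 max as bs"
  have len: "length bs = length as"
    using map_eq_imp_length_eq[OF assms(5)] by simp
  have nth: "?xs ! t = min (as ! t) (bs ! t)" "?ys ! t = max (as ! t) (bs ! t)" if "t < length as" for t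
    using that len by simp_all
  have inc: "as ! a < as ! b" "bs ! a < bs ! b" if "a < b" "b < length as" for a b
    using assms(1,2) that len by (auto simp: sorted_wrt_iff_nth_less)
  have inj: "as ! a \<noteq> as ! b" "bs ! a \<noteq> bs ! b" if "a \<noteq> b" "a < length as" "b < length as" for a b
    using inc that by (metis less_irrefl linorder_neqE_nat)+
  have cross: "as ! a \<noteq> bs ! b" if "a < length as" "b < length as" for a b
    using assms(3) that len by (metis disjoint_iff nth_mem)
  have letters: "w ! (as ! t) = w ! (bs ! t)" if "t < length as" for t
    using assms(5) that len by (metis nth_map)
  have bounded: "as ! t < length w" "bs ! t < length w" if "t < length as" for t
  proof -
    have "as ! t \<in> set as \<union> set bs" "bs ! t \<in> set as \<union> set bs"
      using that len by simp_all
    then show "as ! t < length w" "bs ! t < length w"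
      using assms(4) by (meson lessThan_iff subsetD)+
  qed
  have "?xs ! a < ?xs ! b \<and> ?ys ! a < ?ys ! b" if "a < b" "b < length as" for a b
    using inc[OF that] that by (simp add: nth) (simp add: min_def max_def)
  then have "sorted_wrt (<) ?xs" "sorted_wrt (<) ?ys"
    by (simp_all add: sorted_wrt_iff_nth_less len)
  moreover have "?xs ! a \<noteq> ?ys ! b" if "a < length as" "b < length as" for a b
    using that inj[of a b] cross[of a b] cross[of b a] cross[of a a]
    unfolding nth[OF that(1)] nth[OF that(2)] by (cases "a = b") (auto simp: min_def max_def)
  then have "set ?xs \<inter> set ?ys = {}"
    using len by (auto simp: in_set_conv_nth)
  moreover have "set ?ys \<subseteq> {..<length w}"
    using bounded len by (auto simp: in_set_conv_nth nth)
  moreover have "?xs ! t < ?ys ! t \<and> w ! (?xs ! t) = w ! (?ys ! t)" if "t < length as" for t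
    unfolding nth[OF that] using cross[OF that that] letters[OF that] by (auto simp: min_def max_def)
  then have "list_all2 (\<lambda>x y. x < y \<and> w ! x = w ! y) ?xs ?ys"
    by (simp add: list_all2_conv_all_nth len)
  ultimately show ?thesis
    by (simp add: twin_lists_def)
qed

lemma twin_lists_of_twins:
  assumes "twins w I J"
  obtains xs ys where "twin_lists w xs ys" and "length xs = card I"
proof -
  let ?as = "sorted_list_of_set I" and ?bs = "sorted_list_of_set J"
  have I: "I \<subseteq> {..<length w}" and J: "J \<subseteq> {..<length w}"
    using assms by (auto simp: twins_def)
  then have set_as: "set ?as = I" and set_bs: "set ?bs = J"
    using finite_subset[OF I] finite_subset[OF J] by simp_all
  have sorted: "sorted_wrt (<) ?as" "sorted_wrt (<) ?bs"
    by (simp_all add: strict_sorted_list_of_set)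
  have "map ((!) w) ?as = map ((!) w) ?bs"
    using assms nths_set_eq_map_nth[OF sorted(1), of w] nths_set_eq_map_nth[OF sorted(2), of w]
    by (simp add: set_as set_bs I J twins_def)
  then have "twin_lists w (map2 min ?as ?bs) (map2 max ?as ?bs)"
    using assms sorted by (intro twin_lists_min_max) (auto simp: set_as set_bs twins_def)
  moreover have "length (map2 min ?as ?bs) = card I"
    using map_eq_imp_length_eq[OF \<open>map ((!) w) ?as = map ((!) w) ?bs\<close>] by simp
  ultimately show thesis
    by (rule that)
qed

lemma LT_attained:
  obtains I J where "twins w I J" and "card I = LT w"
proof -
  let ?lengths = "{card I | I J. twins w I J}"
  have "?lengths \<subseteq> {..length w}"
    by (auto simp: twins_def intro: card_mono[of "{..<length w}", simplified])
  then have "finite ?lengths"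
    by (rule finite_subset) simp
  moreover have "twins w {} {}"
    by (simp add: twins_def)
  then have "?lengths \<noteq> {}"
    by blast
  ultimately have "LT w \<in> ?lengths"
    unfolding LT_def by (rule Max_in)
  then show thesis
    using that by auto
qed

lemma twin_lists_of_le_LT:
  assumes "m \<le> LT w"
  obtains xs ys where "twin_lists w xs ys" and "length xs = m"
proof -
  obtain I J where "twins w I J" and "card I = LT w"
    by (rule LT_attained)
  then obtain xs ys where "twin_lists w xs ys" and "length xs = LT w"
    by (metis twin_lists_of_twins)
  then show thesis
    using assms that[of "take m xs" "take m ys"] by (simp add: twin_lists_take)
qed

lemma twin_lists_move_fst:
  assumes tw: "twin_lists w xs ys" and q: "q < length xs" and less: "xs ! q < j"
    and free: "j \<notin> set xs \<union> set ys"
    and gap: "\<And>k. xs ! q < k \<Longrightarrow> k < j \<Longrightarrow> k \<notin> set xs \<union> set ys"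
    and "w ! j = w ! (xs ! q)"
  shows "twin_lists w (xs[q := j]) ys"
proof -
  have avoid: "x < xs ! q \<or> j < x" if "x \<in> set xs \<union> set ys" "x \<noteq> xs ! q" for x
    using gap[of x] free that by fastforce
  have sorted: "sorted_wrt (<) (xs[q := j])"
    using tw q avoid less by (intro sorted_wrt_less_list_update) (auto simp: twin_lists_def)
  have pair: "xs ! q < ys ! q" "w ! (xs ! q) = w ! (ys ! q)" and "ys ! q \<in> set ys"
    using tw q by (auto simp: twin_lists_def list_all2_conv_all_nth)
  then have "j < ys ! q"
    using avoid[of "ys ! q"] by auto
  with tw q pair \<open>w ! j = w ! (xs ! q)\<close>
  have "list_all2 (\<lambda>x y. x < y \<and> w ! x = w ! y) (xs[q := j]) (ys[q := ys ! q])"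
    by (intro list_all2_update_cong) (auto simp: twin_lists_def)
  moreover have "set (xs[q := j]) \<inter> set ys = {}"
    using tw free set_update_subset_insert[of xs q j] by (auto simp: twin_lists_def)
  ultimately show ?thesis
    using tw sorted by (simp add: twin_lists_def)
qed

lemma twin_lists_move_snd:
  assumes tw: "twin_lists w xs ys" and p: "p < length ys" and less: "ys ! p < j" and "j < length w"
    and free: "j \<notin> set xs \<union> set ys"
    and gap: "\<And>k. ys ! p < k \<Longrightarrow> k < j \<Longrightarrow> k \<notin> set xs \<union> set ys"
    and "w ! j = w ! (ys ! p)"
  shows "twin_lists w xs (ys[p := j])"
proof -
  have avoid: "y < ys ! p \<or> j < y" if "y \<in> set ys" "y \<noteq> ys ! p" for y
    using gap[of y] free that by fastforce
  have "sorted_wrt (<) (ys[p := j])"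
    using tw p avoid less by (intro sorted_wrt_less_list_update) (auto simp: twin_lists_def)
  moreover have "xs ! p < ys ! p" "w ! (xs ! p) = w ! (ys ! p)"
    using tw p by (auto simp: twin_lists_def list_all2_conv_all_nth)
  with tw less \<open>w ! j = w ! (ys ! p)\<close>
  have "list_all2 (\<lambda>x y. x < y \<and> w ! x = w ! y) (xs[p := xs ! p]) (ys[p := j])"
    by (intro list_all2_update_cong) (auto simp: twin_lists_def)
  moreover have "set xs \<inter> set (ys[p := j]) = {}" "set (ys[p := j]) \<subseteq> {..<length w}"
    using tw free \<open>j < length w\<close> set_update_subset_insert[of ys p j] by (auto simp: twin_lists_def)
  ultimately show ?thesis
    using tw by (simp add: twin_lists_def)
qed

lemma twin_lists_swap:
  assumes tw: "twin_lists w xs ys" and p: "p < length ys" and q: "q < length xs"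
    and less: "ys ! p < xs ! q"
    and gap: "\<And>k. ys ! p < k \<Longrightarrow> k < xs ! q \<Longrightarrow> k \<notin> set xs \<union> set ys"
    and "w ! (ys ! p) = w ! (xs ! q)"
  shows "twin_lists w (xs[q := ys ! p]) (ys[p := xs ! q])"
proof -
  let ?i = "ys ! p" and ?j = "xs ! q"
  have sorted: "sorted_wrt (<) xs" "sorted_wrt (<) ys" and disj: "set xs \<inter> set ys = {}"
    and pairs: "\<And>t. t < length xs \<Longrightarrow> xs ! t < ys ! t \<and> w ! (xs ! t) = w ! (ys ! t)"
    and len: "length ys = length xs"
    using tw by (auto simp: twin_lists_def list_all2_conv_all_nth)
  have i: "?i \<in> set ys" "?i \<notin> set xs" and j: "?j \<in> set xs" "?j \<notin> set ys"
    using nth_mem[OF p] nth_mem[OF q] disj by blast+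
  have avoid: "x < ?i \<or> ?j < x" if "x \<in> set xs \<union> set ys" "x \<noteq> ?i" "x \<noteq> ?j" for x
    using gap[of x] that by fastforce
  have "sorted_wrt (<) (xs[q := ?i])"
  proof (rule sorted_wrt_less_list_update[OF sorted(1) q])
    fix x assume "x \<in> set xs" "x \<noteq> ?j"
    then show "x < min ?j ?i \<or> max ?j ?i < x"
      using avoid[of x] i(2) less by auto
  qed
  moreover have "sorted_wrt (<) (ys[p := ?j])"
  proof (rule sorted_wrt_less_list_update[OF sorted(2) p])
    fix y assume "y \<in> set ys" "y \<noteq> ?i"
    then show "y < min ?i ?j \<or> max ?i ?j < y"
      using avoid[of y] j(2) less by auto
  qed
  moreover have "p \<noteq> q"
    using pairs[of p] less len p by auto
  then have "xs[q := ?i] ! t < ys[p := ?j] ! t \<and> w ! (xs[q := ?i] ! t) = w ! (ys[p := ?j] ! t)"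
    if "t < length xs" for t
    using pairs[OF that] pairs[of p] pairs[OF q] less len p q \<open>w ! ?i = w ! ?j\<close>
    by (cases "t = q"; cases "t = p") (auto simp: nth_list_update)
  then have "list_all2 (\<lambda>x y. x < y \<and> w ! x = w ! y) (xs[q := ?i]) (ys[p := ?j])"
    by (simp add: list_all2_conv_all_nth len)
  moreover have "set (xs[q := ?i]) \<inter> set (ys[p := ?j]) = {}"
    using sorted disj p q less i j by (auto simp: set_update_distinct strict_sorted_iff)
  moreover have "set (ys[p := ?j]) \<subseteq> {..<length w}"
    using tw p twin_lists_fst_subset[OF tw] j(1) set_update_subset_insert[of ys p ?j]
    by (auto simp: twin_lists_def)
  ultimately show ?thesis
    by (simp add: twin_lists_def)
qed

lemma irregular_twin_lists_cases:
  assumes tw: "twin_lists w xs ys" and irregular: "\<not> regular_twins w (set xs) (set ys)"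
  obtains (swap) i j where "i < j" "j < length w" "i \<in> set ys" "j \<in> set xs"
      "\<And>k. i < k \<Longrightarrow> k < j \<Longrightarrow> k \<notin> set xs \<union> set ys" "w ! i = w ! j"
    | (move) i j where "i < j" "j < length w" "i \<in> set xs \<union> set ys" "j \<notin> set xs \<union> set ys"
      "\<And>k. i < k \<Longrightarrow> k < j \<Longrightarrow> k \<notin> set xs \<union> set ys" "w ! i = w ! j"
proof -
  have "set xs \<inter> set ys = {}"
    using tw by (simp add: twin_lists_def)
  then have Rw: "Rw (set xs) (set ys) i = 0 \<longleftrightarrow> i \<notin> set xs \<union> set ys"
    "Rw (set xs) (set ys) i = 1 \<longleftrightarrow> i \<in> set xs"
    "Rw (set xs) (set ys) i = 2 \<longleftrightarrow> i \<in> set ys"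
    "Rw (set xs) (set ys) i \<in> {1, 2} \<longleftrightarrow> i \<in> set xs \<union> set ys" for i
    by (auto simp: Rw_def)
  show thesis
    using irregular twin_lists_mono_twins[OF tw] that unfolding regular_twins_def Rw by blast
qed

lemma twin_lists_improve:
  assumes tw: "twin_lists w xs ys" and irregular: "\<not> regular_twins w (set xs) (set ys)"
  obtains xs' ys' where "twin_lists w xs' ys'" and "length xs' = length xs"
    and "sum_list xs + sum_list ys < sum_list xs' + sum_list ys' \<or>
      sum_list xs' + sum_list ys' = sum_list xs + sum_list ys \<and> sum_list xs' < sum_list xs"
  using tw irregular
proof (cases rule: irregular_twin_lists_cases)
  case (swap i j)
  obtain p q where p: "p < length ys" "ys ! p = i" and q: "q < length xs" "xs ! q = j"
    using swap(3,4) by (metis in_set_conv_nth)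
  have "twin_lists w (xs[q := i]) (ys[p := j])"
    using twin_lists_swap[OF tw p(1) q(1)] swap p q by simp
  moreover have "sum_list (xs[q := i]) + j = sum_list xs + i" "sum_list (ys[p := j]) + i = sum_list ys + j"
    using p q elem_le_sum_list[OF p(1)] elem_le_sum_list[OF q(1)] swap(1)
    by (simp_all add: sum_list_update)
  ultimately show thesis
    using swap(1) by (intro that[of "xs[q := i]" "ys[p := j]"]) auto
next
  case (move i j)
  consider "i \<in> set xs" | "i \<in> set ys"
    using move(3) by blast
  then show thesis
  proof cases
    case 1
    then obtain q where q: "q < length xs" "xs ! q = i"
      by (metis in_set_conv_nth)
    have "twin_lists w (xs[q := j]) ys"
      using twin_lists_move_fst[OF tw q(1)] move q by simp
    moreover have "sum_list (xs[q := j]) + i = sum_list xs + j"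
      using q elem_le_sum_list[OF q(1)] by (simp add: sum_list_update)
    ultimately show thesis
      using move(1) by (intro that[of "xs[q := j]" ys]) auto
  next
    case 2
    then obtain p where p: "p < length ys" "ys ! p = i"
      by (metis in_set_conv_nth)
    have "twin_lists w xs (ys[p := j])"
      using twin_lists_move_snd[OF tw p(1)] move p by simp
    moreover have "sum_list (ys[p := j]) + i = sum_list ys + j"
      using p elem_le_sum_list[OF p(1)] by (simp add: sum_list_update)
    ultimately show thesis
      using move(1) by (intro that[of xs "ys[p := j]"]) auto
  qed
qed

lemma regular_twins_of_twin_lists:
  assumes "twin_lists w xs ys"
  shows "\<exists>I J. regular_twins w I J \<and> card I = length xs"
proof -
  let ?order = "measures [\<lambda>(xs, ys). \<Sum>{..<length w} - (sum_list xs + sum_list ys),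
    \<lambda>(xs, ys). sum_list xs]"
  have "wf ?order"
    by simp
  then show ?thesis
    using assms
  proof (induction "(xs, ys)" arbitrary: xs ys rule: wf_induct_rule)
    case less
    show ?case
    proof (cases "regular_twins w (set xs) (set ys)")
      case True
      then show ?thesis
        using twin_lists_card[OF less.prems] by blast
    next
      case False
      then obtain xs' ys' where tw': "twin_lists w xs' ys'" and "length xs' = length xs"
        and "sum_list xs + sum_list ys < sum_list xs' + sum_list ys' \<or>
          sum_list xs' + sum_list ys' = sum_list xs + sum_list ys \<and> sum_list xs' < sum_list xs"
        using twin_lists_improve[OF less.prems] by blast
      moreover have "sum_list xs' + sum_list ys' \<le> \<Sum>{..<length w}"
        using twin_lists_sum_list_le[OF tw'] .
      ultimately have "((xs', ys'), (xs, ys)) \<in> ?order"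
        by auto
      then show ?thesis
        using less.hyps tw' \<open>length xs' = length xs\<close> by metis
    qed
  qed
qed

theorem lemma18:
  fixes w :: "nat list" and k n m :: nat
  assumes "length w = n" and "set w \<subseteq> {1..k}"
    and "0 < m" and "LT w \<ge> m"
  shows "\<exists>I J. regular_twins w I J \<and> card I = m"
proof -
  obtain xs ys where "twin_lists w xs ys" and "length xs = m"
    using assms(4) by (rule twin_lists_of_le_LT)
  then show ?thesis
    using regular_twins_of_twin_lists by metis
qed

end
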